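(* Let $\mu$ be a probability measure on $\mathbb{R}$, let $X_1,X_2,\dots$ be i.i.d. $2\times2$ random matrices whose entries are i.i.d. with law $\mu$, and $A_n=X_1X_2\cdots X_n$. Then for every $n\ge1$, $\Pr(A_n\text{ has all eigenvalues real})\ge\frac12$. *)

theory Defs
  imports "HOL-Probability.Probability"
begin

definition cmat :: "real^2^2 \<Rightarrow> complex^2^2" where
  "cmat A = (\<chi> i j. complex_of_real (A $ i $ j))"

definition is_eigenvalue :: "real^2^2 \<Rightarrow> complex \<Rightarrow> bool" where
  "is_eigenvalue A z \<longleftrightarrow> (\<exists>v :: complex^2. v \<noteq> 0 \<and> cmat A *v v = z *s v)"

definition all_eigenvalues_real :: "real^2^2 \<Rightarrow> bool" where
  "all_eigenvalues_real A \<longleftrightarrow> (\<forall>z. is_eigenvalue A z \<longrightarrow> Im z = 0)"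

fun mprod :: "(nat \<Rightarrow> real^2^2) \<Rightarrow> nat \<Rightarrow> real^2^2" where
  "mprod X 0 = mat 1"
| "mprod X (Suc n) = mprod X n ** X (Suc n)"

end

theory Submission
  imports Defs
begin

text \<open>A real 2\<times>2 matrix has real eigenvalues iff its discriminant \<open>tr\<^sup>2 - 4 det\<close> is nonnegative.
  Let \<open>A'\<close> be \<open>A\<close> with its two rows interchanged; since \<open>det A' = - det A\<close>, the discriminants
  of \<open>A B\<close> and \<open>A' B\<close> add up to \<open>tr(A B)\<^sup>2 + tr(A' B)\<^sup>2\<close>, so at least one of them is
  nonnegative. Since the entries are i.i.d., interchanging the rows of \<open>X\<^sub>1\<close> preserves the joint law of all entries. Thus the event
  "\<open>A\<^sub>n\<close> has real eigenvalues" and its preimage under this swap have equal probability and together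
  cover the sample space, so each has probability at least \<open>1/2\<close>.\<close>

definition disc :: "real^2^2 \<Rightarrow> real" where
  "disc A = (trace A)\<^sup>2 - 4 * det A"

lemma disc_2: "disc A = (A$1$1 - A$2$2)\<^sup>2 + 4 * (A$1$2 * A$2$1)"
  by (simp add: disc_def trace_def sum_2 det_2 power2_eq_square algebra_simps)

lemma is_eigenvalue_imp_char_eq:
  assumes "is_eigenvalue A z"
  shows "z\<^sup>2 - of_real (trace A) * z + of_real (det A) = 0"
proof -
  obtain v :: "complex^2" where "v \<noteq> 0" and ev: "cmat A *v v = z *s v"
    using assms unfolding is_eigenvalue_def by blast
  define a where "a = complex_of_real (A$1$1)"
  define b where "b = complex_of_real (A$1$2)"
  define c where "c = complex_of_real (A$2$1)"
  define d where "d = complex_of_real (A$2$2)"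
  have e1: "(a - z) * v$1 + b * v$2 = 0" and e2: "c * v$1 + (d - z) * v$2 = 0"
    using ev unfolding vec_eq_iff forall_2
    by (simp_all add: cmat_def matrix_vector_mult_def sum_2 a_def b_def c_def d_def algebra_simps)
  \<comment> \<open>Cramer's rule: the determinant of the system annihilates both components of \<open>v\<close>.\<close>
  have "((a - z) * (d - z) - b * c) * v$1 = (d - z) * ((a - z) * v$1 + b * v$2) - b * (c * v$1 + (d - z) * v$2)"
   and "((a - z) * (d - z) - b * c) * v$2 = (a - z) * (c * v$1 + (d - z) * v$2) - c * ((a - z) * v$1 + b * v$2)"
    by (simp_all add: algebra_simps)
  moreover have "v$1 \<noteq> 0 \<or> v$2 \<noteq> 0"
    using \<open>v \<noteq> 0\<close> by (auto simp: vec_eq_iff forall_2)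
  ultimately have "(a - z) * (d - z) - b * c = 0"
    using e1 e2 by auto
  then show ?thesis
    by (simp add: trace_def det_2 sum_2 a_def b_def c_def d_def power2_eq_square algebra_simps)
qed

lemma char_eq_imp_is_eigenvalue:
  assumes "A$1$2 \<noteq> 0" and "z\<^sup>2 - of_real (trace A) * z + of_real (det A) = 0"
  shows "is_eigenvalue A z"
proof -
  define v :: "complex^2" where "v = (\<chi> i. if i = 1 then of_real (A$1$2) else z - of_real (A$1$1))"
  have "v \<noteq> 0"
    using assms(1) by (auto simp: v_def vec_eq_iff)
  moreover have "cmat A *v v = z *s v"
    using assms(2) unfolding vec_eq_iff forall_2
    by (auto simp: v_def cmat_def matrix_vector_mult_def sum_2 trace_def det_2 algebra_simps power2_eq_square)
  ultimately show ?thesis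
    unfolding is_eigenvalue_def by blast
qed

lemma quadratic_root_Im_eq_0:
  fixes t d :: real
  assumes root: "z\<^sup>2 - of_real t * z + of_real d = 0" and "t\<^sup>2 - 4 * d \<ge> 0"
  shows "Im z = 0"
proof (rule ccontr)
  assume "Im z \<noteq> 0"
  have im: "Im z * (2 * Re z - t) = 0" and re: "(Re z)\<^sup>2 - (Im z)\<^sup>2 - t * Re z + d = 0"
    using root by (simp_all add: complex_eq_iff power2_eq_square algebra_simps)
  from im \<open>Im z \<noteq> 0\<close> have "Re z = t / 2"
    by simp
  with re have "4 * (Im z)\<^sup>2 = - (t\<^sup>2 - 4 * d)"
    by (simp add: power2_eq_square field_simps)
  with \<open>Im z \<noteq> 0\<close> \<open>t\<^sup>2 - 4 * d \<ge> 0\<close> show False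
    by (smt (verit) zero_less_power2)
qed

lemma quadratic_nonreal_root:
  fixes t d :: real
  assumes "t\<^sup>2 - 4 * d < 0"
  obtains z where "z\<^sup>2 - of_real t * z + of_real d = 0" and "Im z \<noteq> 0"
proof
  define s where "s = sqrt (4 * d - t\<^sup>2)"
  have "s\<^sup>2 = 4 * d - t\<^sup>2" and "s > 0"
    using assms by (simp_all add: s_def)
  then show "(Complex (t / 2) (s / 2))\<^sup>2 - of_real t * Complex (t / 2) (s / 2) + of_real d = 0"
    by (simp add: complex_eq_iff power2_eq_square field_simps)
  show "Im (Complex (t / 2) (s / 2)) \<noteq> 0"
    using \<open>s > 0\<close> by simp
qed

lemma all_eigenvalues_real_iff_disc_nonneg: "all_eigenvalues_real A \<longleftrightarrow> disc A \<ge> 0"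
proof
  assume real: "all_eigenvalues_real A"
  show "disc A \<ge> 0"
  proof (rule ccontr)
    assume "\<not> disc A \<ge> 0"
    then have "A$1$2 \<noteq> 0"
      by (cases "A$1$2 = 0") (auto simp: disc_2)
    moreover obtain z where "z\<^sup>2 - of_real (trace A) * z + of_real (det A) = 0" and "Im z \<noteq> 0"
      using quadratic_nonreal_root \<open>\<not> disc A \<ge> 0\<close> unfolding disc_def by (metis linorder_not_le)
    ultimately show False
      using real char_eq_imp_is_eigenvalue unfolding all_eigenvalues_real_def by blast
  qed
next
  assume "disc A \<ge> 0"
  then show "all_eigenvalues_real A"
    unfolding all_eigenvalues_real_def disc_def
    using is_eigenvalue_imp_char_eq quadratic_root_Im_eq_0 by blast
qed

definition swap_rows :: "real^2^2 \<Rightarrow> real^2^2" where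
  "swap_rows A = (\<chi> i j. A $ (if i = 1 then 2 else 1) $ j)"

lemma det_swap_rows: "det (swap_rows A) = - det A"
  by (simp add: det_2 swap_rows_def)

lemma disc_mult_add_disc_swap_rows_mult:
  "disc (A ** B) + disc (swap_rows A ** B) = (trace (A ** B))\<^sup>2 + (trace (swap_rows A ** B))\<^sup>2"
  by (simp add: disc_def det_mul det_swap_rows)

lemma disc_mult_nonneg_or_disc_swap_rows_mult_nonneg:
  "disc (A ** B) \<ge> 0 \<or> disc (swap_rows A ** B) \<ge> 0"
  using disc_mult_add_disc_swap_rows_mult[of A B]
  by (smt (verit) zero_le_power2)

lemma mprod_cong:
  "(\<And>k. 1 \<le> k \<Longrightarrow> k \<le> n \<Longrightarrow> X k = Y k) \<Longrightarrow> mprod X n = mprod Y n"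
  by (induction n) auto

lemma mprod_Suc_left: "mprod X (Suc n) = X 1 ** mprod (\<lambda>k. X (Suc k)) n"
  by (induction n) (auto simp: matrix_mul_assoc)

lemma disc_mprod_nonneg_or_swap_first:
  assumes "n \<ge> 1" and "Y 1 = swap_rows (X 1)" and "\<And>k. 2 \<le> k \<Longrightarrow> k \<le> n \<Longrightarrow> Y k = X k"
  shows "disc (mprod X n) \<ge> 0 \<or> disc (mprod Y n) \<ge> 0"
proof -
  obtain m where n: "n = Suc m"
    using assms(1) by (cases n) auto
  have "mprod (\<lambda>k. Y (Suc k)) m = mprod (\<lambda>k. X (Suc k)) m"
    using assms(3) by (intro mprod_cong) (auto simp: n)
  then show ?thesis
    unfolding n mprod_Suc_left assms(2)
    by (rule ssubst) (rule disc_mult_nonneg_or_disc_swap_rows_mult_nonneg)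
qed

lemma borel_measurable_mprod_entry:
  assumes "\<And>k i j. 1 \<le> k \<Longrightarrow> k \<le> n \<Longrightarrow> (\<lambda>x. F x k $ i $ j) \<in> borel_measurable N"
  shows "(\<lambda>x. mprod (F x) n $ i $ j) \<in> borel_measurable N"
  using assms
proof (induction n arbitrary: i j)
  case 0
  then show ?case
    by (simp add: mat_def)
next
  case (Suc n)
  have "(\<lambda>x. mprod (F x) n $ i $ j) \<in> borel_measurable N"
   and "(\<lambda>x. F x (Suc n) $ i $ j) \<in> borel_measurable N" for i j
    using Suc by auto
  then show ?case
    by (simp add: matrix_matrix_mult_def sum_2)
qed

lemma (in prob_space) prob_ge_half_if_covered_by_preimage:
  assumes T: "T \<in> measurable M M" "distr M M T = M"
    and E: "E \<in> events" and cover: "space M \<subseteq> E \<union> T -` E"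
  shows "prob E \<ge> 1 / 2"
proof -
  let ?F = "T -` E \<inter> space M"
  have F: "?F \<in> events"
    using T(1) E by measurable
  have "prob ?F = prob E"
    using measure_distr[OF T(1) E] T(2) by simp
  have "1 = prob (space M)"
    by (simp add: prob_space)
  also have "\<dots> \<le> prob (E \<union> ?F)"
    using cover E F by (intro finite_measure_mono) auto
  also have "\<dots> \<le> prob E + prob ?F"
    using E F by (rule measure_Un_le)
  finally show ?thesis
    using \<open>prob ?F = prob E\<close> by simp
qed

lemma (in prob_space) measurable_restrict_indep_vars:
  assumes "indep_vars (\<lambda>_. N) X I" and "sets \<mu> = sets N"
  shows "(\<lambda>\<omega>. \<lambda>i\<in>I. X i \<omega>) \<in> measurable M (\<Pi>\<^sub>M i\<in>I. \<mu>)"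
proof -
  have "(\<lambda>\<omega>. \<lambda>i\<in>I. X i \<omega>) \<in> measurable M (\<Pi>\<^sub>M i\<in>I. N)"
    using assms(1) unfolding indep_vars_def by (intro measurable_restrict) blast
  moreover have "sets (\<Pi>\<^sub>M i\<in>I. N) = sets (\<Pi>\<^sub>M i\<in>I. \<mu>)"
    using assms(2) by (intro sets_PiM_cong) auto
  ultimately show ?thesis
    using measurable_cong_sets by blast
qed

lemma (in prob_space) distr_restrict_indep_vars_identically_distributed:
  assumes indep: "indep_vars (\<lambda>_. N) X I" and "I \<noteq> {}"
    and law: "\<And>i. i \<in> I \<Longrightarrow> distr M N (X i) = \<mu>" and "sets \<mu> = sets N"
  shows "distr M (\<Pi>\<^sub>M i\<in>I. \<mu>) (\<lambda>\<omega>. \<lambda>i\<in>I. X i \<omega>) = (\<Pi>\<^sub>M i\<in>I. \<mu>)"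
proof -
  have "distr M (\<Pi>\<^sub>M i\<in>I. \<mu>) (\<lambda>\<omega>. \<lambda>i\<in>I. X i \<omega>) = distr M (\<Pi>\<^sub>M i\<in>I. N) (\<lambda>\<omega>. \<lambda>i\<in>I. X i \<omega>)"
    using assms(4) by (intro distr_cong sets_PiM_cong) auto
  also have "\<dots> = (\<Pi>\<^sub>M i\<in>I. distr M N (X i))"
  proof -
    have rv: "\<And>i. i \<in> I \<Longrightarrow> random_variable N (X i)"
      using indep unfolding indep_vars_def by blast
    show ?thesis
      using indep indep_vars_iff_distr_eq_PiM'[where M'="\<lambda>_. N", OF \<open>I \<noteq> {}\<close> rv] by simp
  qed
  also have "\<dots> = (\<Pi>\<^sub>M i\<in>I. \<mu>)"
    using law by (intro PiM_cong) auto
  finally show ?thesis .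
qed

definition sample_matrix :: "(nat \<times> 2 \<times> 2 \<Rightarrow> real) \<Rightarrow> nat \<Rightarrow> real^2^2" where
  "sample_matrix x k = (\<chi> i j. x (k, i, j))"

definition swap_rows_index :: "nat \<times> 2 \<times> 2 \<Rightarrow> nat \<times> 2 \<times> 2" where
  "swap_rows_index = (\<lambda>(k, i, j). (k, if k = 1 then (if i = 1 then 2 else 1) else i, j))"

lemma swap_rows_index_swap_rows_index: "swap_rows_index (swap_rows_index p) = p"
  using exhaust_2 by (cases p) (auto simp: swap_rows_index_def)

lemma sets_disc_mprod_sample_matrix_nonneg:
  fixes n :: nat
  assumes "sets \<mu> = sets borel"
  defines "Q \<equiv> \<Pi>\<^sub>M p\<in>{1..n} \<times> UNIV. \<mu>"
  shows "{x \<in> space Q. disc (mprod (sample_matrix x) n) \<ge> 0} \<in> sets Q"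
proof -
  have "(\<lambda>x. x p) \<in> borel_measurable Q" if "p \<in> {1..n} \<times> UNIV" for p
    using measurable_component_singleton[OF that, of "\<lambda>_. \<mu>"] measurable_cong_sets[OF refl assms(1)]
    unfolding Q_def by blast
  then have "(\<lambda>x. mprod (sample_matrix x) n $ i $ j) \<in> borel_measurable Q" for i j
    by (intro borel_measurable_mprod_entry) (simp add: sample_matrix_def)
  then show ?thesis
    unfolding disc_2 by measurable
qed

lemma prob_disc_mprod_sample_matrix_nonneg:
  assumes "prob_space \<mu>" and "sets \<mu> = sets borel" and "n \<ge> 1"
  defines "Q \<equiv> \<Pi>\<^sub>M p\<in>{1..n} \<times> UNIV. \<mu>"
  shows "measure Q {x \<in> space Q. disc (mprod (sample_matrix x) n) \<ge> 0} \<ge> 1 / 2"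
proof -
  let ?I = "{1..n} \<times> UNIV :: (nat \<times> 2 \<times> 2) set"
  let ?E = "{x \<in> space Q. disc (mprod (sample_matrix x) n) \<ge> 0}"
  interpret Q: prob_space Q
    unfolding Q_def using assms(1) by (rule prob_space_PiM)
  define T where "T x = (\<lambda>p\<in>?I. x (swap_rows_index p))" for x :: "nat \<times> 2 \<times> 2 \<Rightarrow> real"
  have swap_I: "swap_rows_index \<in> ?I \<rightarrow> ?I"
    by (auto simp: swap_rows_index_def)
  have T: "T \<in> measurable Q Q"
    unfolding T_def Q_def using swap_I by (intro measurable_restrict measurable_component_singleton) auto
  have "inj_on swap_rows_index ?I"
    by (metis inj_on_inverseI swap_rows_index_swap_rows_index)
  then have "distr Q Q T = Q"
    unfolding Q_def T_def using distr_PiM_reindex[OF assms(1) _ swap_I] by simp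
  moreover have "space Q \<subseteq> ?E \<union> T -` ?E"
  proof
    fix x assume x: "x \<in> space Q"
    have "disc (mprod (sample_matrix x) n) \<ge> 0 \<or> disc (mprod (sample_matrix (T x)) n) \<ge> 0"
      using assms(3)
      by (intro disc_mprod_nonneg_or_swap_first)
         (auto simp: sample_matrix_def swap_rows_def T_def swap_rows_index_def vec_eq_iff)
    then show "x \<in> ?E \<union> T -` ?E"
      using x measurable_space[OF T x] by auto
  qed
  ultimately show ?thesis
    using T Q.prob_ge_half_if_covered_by_preimage sets_disc_mprod_sample_matrix_nonneg[OF assms(2)]
    unfolding Q_def by blast
qed

theorem mainTheorem20:
  fixes M :: "'a measure" and \<mu> :: "real measure"
    and X :: "nat \<Rightarrow> 'a \<Rightarrow> real^2^2" and n :: nat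
  assumes "prob_space M"
    and "prob_space \<mu>" and "sets \<mu> = sets borel"
    and "prob_space.indep_vars M (\<lambda>_. borel) (\<lambda>(k, i, j) \<omega>. X k \<omega> $ i $ j) ({1::nat..} \<times> UNIV \<times> UNIV)"
    and "\<And>k i j. k \<ge> 1 \<Longrightarrow> distr M borel (\<lambda>\<omega>. X k \<omega> $ i $ j) = \<mu>"
    and "n \<ge> 1"
  shows "measure M {\<omega> \<in> space M. all_eigenvalues_real (mprod (\<lambda>k. X k \<omega>) n)} \<ge> 1 / 2"
proof -
  interpret prob_space M by fact
  let ?I = "{1..n} \<times> UNIV :: (nat \<times> 2 \<times> 2) set"
  define Q where "Q = (\<Pi>\<^sub>M p\<in>?I. \<mu>)"
  define entry :: "nat \<times> 2 \<times> 2 \<Rightarrow> 'a \<Rightarrow> real" where "entry = (\<lambda>(k, i, j) \<omega>. X k \<omega> $ i $ j)"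
  define Y where "Y \<omega> = (\<lambda>p\<in>?I. entry p \<omega>)" for \<omega>
  let ?E = "{x \<in> space Q. disc (mprod (sample_matrix x) n) \<ge> 0}"
  have indep: "indep_vars (\<lambda>_. borel) entry ?I"
    using assms(4)[folded entry_def] by (rule indep_vars_subset) auto
  have Y: "Y \<in> measurable M Q"
    unfolding Y_def Q_def using indep assms(3) by (rule measurable_restrict_indep_vars)
  have "distr M Q Y = Q"
    unfolding Y_def Q_def using indep assms(3,5,6)
    by (intro distr_restrict_indep_vars_identically_distributed) (auto simp: entry_def)
  moreover have "{\<omega> \<in> space M. all_eigenvalues_real (mprod (\<lambda>k. X k \<omega>) n)} = Y -` ?E \<inter> space M"
  proof -
    have "mprod (sample_matrix (Y \<omega>)) n = mprod (\<lambda>k. X k \<omega>) n" for \<omega>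
      by (rule mprod_cong) (auto simp: sample_matrix_def Y_def entry_def vec_eq_iff)
    then show ?thesis
      using measurable_space[OF Y] by (auto simp: all_eigenvalues_real_iff_disc_nonneg)
  qed
  moreover have "?E \<in> sets Q"
    unfolding Q_def using assms(3) by (rule sets_disc_mprod_sample_matrix_nonneg)
  ultimately show ?thesis
    using measure_distr[OF Y] prob_disc_mprod_sample_matrix_nonneg[OF assms(2,3,6)]
    unfolding Q_def by simp
qed

end
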